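(* Let $U$ be a subgroup of $G^*$ and let $F$ be a $U$-symmetric matching mechanism. Then $F$ admits a refinement $H$ (a matching mechanism with $H(p)\subseteq F(p)$ for all $p\in\mathcal{P}$) that is $U$-symmetric and resolute if and only if $F(p)\cap C^U(p)\neq\varnothing$ for every $p\in\mathcal{P}$.
   Context: Fix $n\ge 2$, $W=\{1,\dots,n\}$, $M=\{n+1,\dots,2n\}$, $I=W\cup M$. Permutations compose right-to-left. A preference profile is a function $p$ on $I$ assigning to each $x\in W$ a linear order $p(x)$ on $M$ and to each $y\in M$ a linear order $p(y)$ on $W$; $\mathcal{P}$ is the set of preference profiles. A matching is a permutation $\mu$ of $I$ with $\mu(W)=M$, $\mu(M)=W$ and $\mu(\mu(z))=z$ for all $z$; $\mathcal{M}$ is the set of matchings. $G^*=\{\varphi\in\mathrm{Sym}(I):\{\varphi(W),\varphi(M)\}=\{W,M\}\}$. For a linear order $R$ on $X\subseteq I$ and $\varphi\in\mathrm{Sym}(I)$, $\varphi R$ is the relation on $\varphi(X)$ with $(a,b)\in\varphi R$ iff $(\varphi^{-1}(a),\varphi^{-1}(b))\in R$. For $p\in\mathcal{P}$, $\varphi\in G^*$, $p^\varphi(z)=\varphi\,p(\varphi^{-1}(z))$. For a permutation $\mu$, $\mu^\varphi=\varphi\mu\varphi^{-1}$; $S^\varphi=\{\mu^\varphi:\mu\in S\}$. A matching mechanism is a correspondence $F$ from $\mathcal{P}$ to $\mathcal{M}$; resolute if $|F(p)|=1$ for all $p$; $U$-symmetric if $F(p^\varphi)=F(p)^\varphi$ for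 all $p$ and $\varphi\in U$. For $U\le G^*$ and $p\in\mathcal{P}$, $\mathrm{Stab}_U(p)=\{\varphi\in U:p^\varphi=p\}$ and $C^U(p)=\{\mu\in\mathcal{M}:\mu^\varphi=\mu \text{ for all }\varphi\in\mathrm{Stab}_U(p)\}$. *)

theory Defs
  imports "HOL-Combinatorics.Permutations"
begin

text \<open>Agents: women W = {1..n}, men M = {n+1..2n}, I = W \<union> M.
  Permutations of I are functions nat \<Rightarrow> nat that permute I (identity outside I).\<close>

definition Wset :: "nat \<Rightarrow> nat set" where "Wset n = {1..n}"
definition Mset :: "nat \<Rightarrow> nat set" where "Mset n = {n+1..2*n}"
definition Iset :: "nat \<Rightarrow> nat set" where "Iset n = Wset n \<union> Mset n"

definition rel_act :: "(nat \<Rightarrow> nat) \<Rightarrow> (nat \<times> nat) set \<Rightarrow> (nat \<times> nat) set" where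
  "rel_act \<phi> R = {(a, b). (inv \<phi> a, inv \<phi> b) \<in> R}"

text \<open>Preference profiles; the value outside I is fixed to be empty so that
  profiles are determined by their values on I.\<close>
definition profiles :: "nat \<Rightarrow> (nat \<Rightarrow> (nat \<times> nat) set) set" where
  "profiles n = {p. (\<forall>x\<in>Wset n. linear_order_on (Mset n) (p x))
                  \<and> (\<forall>y\<in>Mset n. linear_order_on (Wset n) (p y))
                  \<and> (\<forall>z. z \<notin> Iset n \<longrightarrow> p z = {})}"

definition matchings :: "nat \<Rightarrow> (nat \<Rightarrow> nat) set" where
  "matchings n = {\<mu>. \<mu> permutes Iset n \<and> \<mu> ` Wset n = Mset n \<and> \<mu> ` Mset n = Wset n
                    \<and> (\<forall>z\<in>Iset n. \<mu> (\<mu> z) = z)}"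

definition Gstar :: "nat \<Rightarrow> (nat \<Rightarrow> nat) set" where
  "Gstar n = {\<phi>. \<phi> permutes Iset n \<and> {\<phi> ` Wset n, \<phi> ` Mset n} = {Wset n, Mset n}}"

definition is_subgroup :: "(nat \<Rightarrow> nat) set \<Rightarrow> (nat \<Rightarrow> nat) set \<Rightarrow> bool" where
  "is_subgroup U G \<longleftrightarrow> U \<subseteq> G \<and> id \<in> U \<and> (\<forall>a\<in>U. \<forall>b\<in>U. a \<circ> b \<in> U) \<and> (\<forall>a\<in>U. inv a \<in> U)"

definition prof_act :: "(nat \<Rightarrow> nat) \<Rightarrow> (nat \<Rightarrow> (nat \<times> nat) set) \<Rightarrow> (nat \<Rightarrow> (nat \<times> nat) set)" where
  "prof_act \<phi> p = (\<lambda>z. rel_act \<phi> (p (inv \<phi> z)))"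

definition perm_conj :: "(nat \<Rightarrow> nat) \<Rightarrow> (nat \<Rightarrow> nat) \<Rightarrow> (nat \<Rightarrow> nat)" where
  "perm_conj \<phi> \<mu> = \<phi> \<circ> \<mu> \<circ> inv \<phi>"

definition mechanism :: "nat \<Rightarrow> ((nat \<Rightarrow> (nat \<times> nat) set) \<Rightarrow> (nat \<Rightarrow> nat) set) \<Rightarrow> bool" where
  "mechanism n F \<longleftrightarrow> (\<forall>p\<in>profiles n. F p \<subseteq> matchings n)"

definition resolute :: "nat \<Rightarrow> ((nat \<Rightarrow> (nat \<times> nat) set) \<Rightarrow> (nat \<Rightarrow> nat) set) \<Rightarrow> bool" where
  "resolute n F \<longleftrightarrow> (\<forall>p\<in>profiles n. card (F p) = 1)"

definition symmetric :: "nat \<Rightarrow> (nat \<Rightarrow> nat) set \<Rightarrow> ((nat \<Rightarrow> (nat \<times> nat) set) \<Rightarrow> (nat \<Rightarrow> nat) set) \<Rightarrow> bool" where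
  "symmetric n U F \<longleftrightarrow> (\<forall>p\<in>profiles n. \<forall>\<phi>\<in>U. F (prof_act \<phi> p) = perm_conj \<phi> ` F p)"

definition Stab :: "(nat \<Rightarrow> nat) set \<Rightarrow> (nat \<Rightarrow> (nat \<times> nat) set) \<Rightarrow> (nat \<Rightarrow> nat) set" where
  "Stab U p = {\<phi>\<in>U. prof_act \<phi> p = p}"

definition CU :: "nat \<Rightarrow> (nat \<Rightarrow> nat) set \<Rightarrow> (nat \<Rightarrow> (nat \<times> nat) set) \<Rightarrow> (nat \<Rightarrow> nat) set" where
  "CU n U p = {\<mu>\<in>matchings n. \<forall>\<phi>\<in>Stab U p. perm_conj \<phi> \<mu> = \<mu>}"

end

theory Submission
  imports Defs
begin

text \<open>Only the group-action structure matters. If \<open>H\<close> is resolute and \<open>U\<close>-symmetric, the matching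
  \<open>H(p)\<close> is fixed by every \<open>\<phi>\<close> in the stabiliser of \<open>p\<close>. Conversely, pick one profile \<open>r\<close> in
  every \<open>U\<close>-orbit and a matching \<open>\<mu>\<^sub>r \<in> F(r) \<inter> C\<^sup>U(r)\<close>, and set \<open>H(\<phi> r) = {\<mu>\<^sub>r\<^sup>\<phi>}\<close>. This is
  well defined because any \<open>\<phi>, \<psi>\<close> with \<open>\<phi> r = \<psi> r\<close> differ by an element of the stabiliser of
  \<open>r\<close>, which fixes \<open>\<mu>\<^sub>r\<close>; and \<open>H(\<phi> r) \<subseteq> F(r)\<^sup>\<phi> = F(\<phi> r)\<close> by symmetry of \<open>F\<close>.\<close>

locale perm_group =
  fixes U :: "('a \<Rightarrow> 'a) set"
  assumes id_mem: "id \<in> U"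
    and comp_mem: "\<phi> \<in> U \<Longrightarrow> \<psi> \<in> U \<Longrightarrow> \<phi> \<circ> \<psi> \<in> U"
    and inv_mem: "\<phi> \<in> U \<Longrightarrow> inv \<phi> \<in> U"
    and bij_mem: "\<phi> \<in> U \<Longrightarrow> bij \<phi>"
begin

lemma inv_comp_cancel: "\<phi> \<in> U \<Longrightarrow> inv \<phi> \<circ> \<phi> = id"
  by (simp add: bij_mem bij_is_inj)

lemma comp_inv_cancel: "\<phi> \<in> U \<Longrightarrow> \<phi> \<circ> inv \<phi> = id"
  by (meson bij_mem bij_is_surj surj_iff)

end

locale perm_group_action = perm_group U for U :: "('a \<Rightarrow> 'a) set" +
  fixes act :: "('a \<Rightarrow> 'a) \<Rightarrow> 'x \<Rightarrow> 'x"
  assumes act_id: "act id x = x"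
    and act_comp: "\<phi> \<in> U \<Longrightarrow> \<psi> \<in> U \<Longrightarrow> act (\<phi> \<circ> \<psi>) x = act \<phi> (act \<psi> x)"
begin

definition orbit :: "'x \<Rightarrow> 'x set" where
  "orbit x = (\<lambda>\<phi>. act \<phi> x) ` U"

definition stabilizer :: "'x \<Rightarrow> ('a \<Rightarrow> 'a) set" where
  "stabilizer x = {\<phi> \<in> U. act \<phi> x = x}"

lemma act_inv_act:
  assumes "\<phi> \<in> U" shows "act (inv \<phi>) (act \<phi> x) = x"
proof -
  have "act (inv \<phi>) (act \<phi> x) = act (inv \<phi> \<circ> \<phi>) x"
    using assms by (simp add: act_comp inv_mem)
  then show ?thesis
    using assms by (simp add: inv_comp_cancel act_id)
qed

lemma mem_orbit_self: "x \<in> orbit x"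
  unfolding orbit_def by (rule image_eqI[where x = id]) (simp_all add: act_id id_mem)

lemma orbit_act: assumes "\<phi> \<in> U" shows "orbit (act \<phi> x) = orbit x"
proof
  have "act \<psi> (act \<phi> x) = act (\<psi> \<circ> \<phi>) x" if "\<psi> \<in> U" for \<psi>
    using that assms by (simp add: act_comp)
  then show "orbit (act \<phi> x) \<subseteq> orbit x"
    unfolding orbit_def using assms comp_mem by blast
  have "act \<psi> x = act (\<psi> \<circ> inv \<phi>) (act \<phi> x)" if "\<psi> \<in> U" for \<psi>
    using that assms by (simp add: act_comp inv_mem act_inv_act)
  then show "orbit x \<subseteq> orbit (act \<phi> x)"
    unfolding orbit_def using assms comp_mem inv_mem by blast
qed

text \<open>\<open>P\<close> need not be closed under the action; the representative is taken inside \<open>P\<close>, and is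
  arbitrary for orbits that miss \<open>P\<close>.\<close>
definition orbit_rep :: "'x set \<Rightarrow> 'x \<Rightarrow> 'x" where
  "orbit_rep P x = (SOME r. r \<in> orbit x \<inter> P)"

lemma orbit_rep_act: "\<phi> \<in> U \<Longrightarrow> orbit_rep P (act \<phi> x) = orbit_rep P x"
  by (simp add: orbit_rep_def orbit_act)

lemma orbit_rep_mem:
  assumes "x \<in> P"
  shows "orbit_rep P x \<in> P" and "\<exists>\<psi>\<in>U. act \<psi> (orbit_rep P x) = x"
proof -
  have "\<exists>r. r \<in> orbit x \<inter> P" using assms mem_orbit_self by blast
  then have "orbit_rep P x \<in> orbit x \<inter> P"
    unfolding orbit_rep_def by (rule someI_ex)
  then obtain \<phi> where "\<phi> \<in> U" "orbit_rep P x = act \<phi> x" "orbit_rep P x \<in> P"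
    unfolding orbit_def by auto
  then show "orbit_rep P x \<in> P" and "\<exists>\<psi>\<in>U. act \<psi> (orbit_rep P x) = x"
    using inv_mem act_inv_act by auto
qed

end

locale perm_group_action_pair =
  source: perm_group_action U act + target: perm_group_action U act'
  for U :: "('a \<Rightarrow> 'a) set" and act :: "('a \<Rightarrow> 'a) \<Rightarrow> 'x \<Rightarrow> 'x"
    and act' :: "('a \<Rightarrow> 'a) \<Rightarrow> 'y \<Rightarrow> 'y"
begin

definition equivariant :: "'x set \<Rightarrow> ('x \<Rightarrow> 'y set) \<Rightarrow> bool" where
  "equivariant P F \<longleftrightarrow> (\<forall>x\<in>P. \<forall>\<phi>\<in>U. F (act \<phi> x) = act' \<phi> ` F x)"

definition stabilizer_invariant :: "'x \<Rightarrow> 'y \<Rightarrow> bool" where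
  "stabilizer_invariant x y \<longleftrightarrow> (\<forall>\<phi>\<in>source.stabilizer x. act' \<phi> y = y)"

definition orbit_transport :: "'x \<Rightarrow> 'y \<Rightarrow> 'x \<Rightarrow> 'y set" where
  "orbit_transport r y x = {act' \<phi> y |\<phi>. \<phi> \<in> U \<and> act \<phi> r = x}"

lemma equivariant_singleton_stabilizer_invariant:
  assumes "equivariant P H" "x \<in> P" "H x = {y}"
  shows "stabilizer_invariant x y"
  unfolding stabilizer_invariant_def source.stabilizer_def
proof (intro ballI)
  fix \<phi> assume "\<phi> \<in> {\<phi> \<in> U. act \<phi> x = x}"
  then have \<phi>: "\<phi> \<in> U" "act \<phi> x = x" by auto
  have "H (act \<phi> x) = act' \<phi> ` H x"
    using assms(1,2) \<phi>(1) unfolding equivariant_def by blast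
  then show "act' \<phi> y = y" using assms(3) \<phi>(2) by simp
qed

lemma target_eq_if_source_eq:
  assumes "stabilizer_invariant r y" "\<phi> \<in> U" "\<psi> \<in> U" "act \<phi> r = act \<psi> r"
  shows "act' \<phi> y = act' \<psi> y"
proof -
  let ?\<sigma> = "inv \<phi> \<circ> \<psi>"
  have \<sigma>: "?\<sigma> \<in> U" using assms(2,3) by (simp add: source.comp_mem source.inv_mem)
  have "act ?\<sigma> r = act (inv \<phi>) (act \<phi> r)"
    using assms(2-4) by (simp add: source.inv_mem source.act_comp)
  also have "\<dots> = r"
    using assms(2) by (rule source.act_inv_act)
  finally have "act' ?\<sigma> y = y"
    using assms(1) \<sigma> unfolding stabilizer_invariant_def source.stabilizer_def by blast
  have "act' \<psi> y = act' (\<phi> \<circ> ?\<sigma>) y"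
    using assms(2) by (simp add: o_assoc source.comp_inv_cancel)
  also have "\<dots> = act' \<phi> (act' ?\<sigma> y)"
    using assms(2) \<sigma> by (rule target.act_comp)
  finally show ?thesis
    using \<open>act' ?\<sigma> y = y\<close> by simp
qed

lemma orbit_transport_eq:
  assumes "stabilizer_invariant r y" "\<phi> \<in> U" "act \<phi> r = x"
  shows "orbit_transport r y x = {act' \<phi> y}"
proof -
  have "act' \<psi> y = act' \<phi> y" if "\<psi> \<in> U" "act \<psi> r = x" for \<psi>
    using target_eq_if_source_eq[OF assms(1) that(1) assms(2)] that(2) assms(3) by simp
  then show ?thesis
    unfolding orbit_transport_def using assms(2,3) by blast
qed

lemma resolute_equivariant_refinement_exists:
  assumes F: "equivariant P F" and choice: "\<forall>x\<in>P. \<exists>y\<in>F x. stabilizer_invariant x y"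
  obtains H where "\<forall>x\<in>P. H x \<subseteq> F x" "equivariant P H" "\<forall>x\<in>P. \<exists>y. H x = {y}"
proof -
  obtain \<mu> where \<mu>: "\<forall>r\<in>P. \<mu> r \<in> F r \<and> stabilizer_invariant r (\<mu> r)"
    using bchoice[OF choice[unfolded Bex_def]] by blast
  define rep where "rep = source.orbit_rep P"
  define H where "H x = orbit_transport (rep x) (\<mu> (rep x)) x" for x
  have rep: "rep x \<in> P" "\<exists>\<psi>\<in>U. act \<psi> (rep x) = x" if "x \<in> P" for x
    using that by (simp_all add: rep_def source.orbit_rep_mem)
  have H_act: "H (act \<phi> x) = {act' (\<phi> \<circ> \<psi>) (\<mu> (rep x))}"
    if x: "x \<in> P" and \<psi>: "\<psi> \<in> U" "act \<psi> (rep x) = x" and \<phi>: "\<phi> \<in> U" for x \<phi> \<psi>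
  proof -
    have "H (act \<phi> x) = orbit_transport (rep x) (\<mu> (rep x)) (act \<phi> x)"
      unfolding H_def rep_def using \<phi> by (simp add: source.orbit_rep_act)
    also have "\<dots> = {act' (\<phi> \<circ> \<psi>) (\<mu> (rep x))}"
    proof (rule orbit_transport_eq)
      show "stabilizer_invariant (rep x) (\<mu> (rep x))" using \<mu> rep(1)[OF x] by blast
      show "\<phi> \<circ> \<psi> \<in> U" using \<phi> \<psi>(1) by (rule source.comp_mem)
      show "act (\<phi> \<circ> \<psi>) (rep x) = act \<phi> x" using \<phi> \<psi> by (simp add: source.act_comp)
    qed
    finally show ?thesis .
  qed
  have H_eq: "H x = {act' \<psi> (\<mu> (rep x))}" if "x \<in> P" "\<psi> \<in> U" "act \<psi> (rep x) = x" for x \<psi>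
    using H_act[OF that source.id_mem] by (simp add: source.act_id)
  show ?thesis
  proof
    show "\<forall>x\<in>P. H x \<subseteq> F x"
    proof
      fix x assume x: "x \<in> P"
      then obtain \<psi> where \<psi>: "\<psi> \<in> U" "act \<psi> (rep x) = x" using rep(2) by blast
      have "F (act \<psi> (rep x)) = act' \<psi> ` F (rep x)"
        using F rep(1)[OF x] \<psi>(1) unfolding equivariant_def by blast
      then have "F x = act' \<psi> ` F (rep x)" using \<psi>(2) by simp
      then show "H x \<subseteq> F x" using H_eq[OF x \<psi>] \<mu> rep(1)[OF x] by auto
    qed
    show "equivariant P H"
      unfolding equivariant_def
    proof (intro ballI)
      fix x \<phi> assume x: "x \<in> P" and \<phi>: "\<phi> \<in> U"
      then obtain \<psi> where \<psi>: "\<psi> \<in> U" "act \<psi> (rep x) = x" using rep(2) by blast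
      show "H (act \<phi> x) = act' \<phi> ` H x"
        using H_act[OF x \<psi> \<phi>] H_eq[OF x \<psi>] \<phi> \<psi>(1) by (simp add: target.act_comp)
    qed
    show "\<forall>x\<in>P. \<exists>y. H x = {y}" using H_eq rep(2) by blast
  qed
qed

theorem resolute_equivariant_refinement_iff:
  assumes "equivariant P F"
  shows "(\<exists>H. (\<forall>x\<in>P. H x \<subseteq> F x) \<and> equivariant P H \<and> (\<forall>x\<in>P. \<exists>y. H x = {y}))
    \<longleftrightarrow> (\<forall>x\<in>P. \<exists>y\<in>F x. stabilizer_invariant x y)"
proof
  assume "\<exists>H. (\<forall>x\<in>P. H x \<subseteq> F x) \<and> equivariant P H \<and> (\<forall>x\<in>P. \<exists>y. H x = {y})"
  then obtain H where H: "\<forall>x\<in>P. H x \<subseteq> F x" "equivariant P H" "\<forall>x\<in>P. \<exists>y. H x = {y}"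
    by blast
  show "\<forall>x\<in>P. \<exists>y\<in>F x. stabilizer_invariant x y"
  proof
    fix x assume x: "x \<in> P"
    then obtain y where y: "H x = {y}" using H(3) by blast
    then have "y \<in> F x" using H(1) x by blast
    moreover have "stabilizer_invariant x y"
      using H(2) x y by (rule equivariant_singleton_stabilizer_invariant)
    ultimately show "\<exists>y\<in>F x. stabilizer_invariant x y" ..
  qed
next
  assume "\<forall>x\<in>P. \<exists>y\<in>F x. stabilizer_invariant x y"
  then show "\<exists>H. (\<forall>x\<in>P. H x \<subseteq> F x) \<and> equivariant P H \<and> (\<forall>x\<in>P. \<exists>y. H x = {y})"
    by (rule resolute_equivariant_refinement_exists[OF assms]) blast
qed

end

lemma perm_group_action_prof_act: "perm_group U \<Longrightarrow> perm_group_action U prof_act"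
  unfolding perm_group_action_def perm_group_action_axioms_def
  by (simp add: perm_group.bij_mem prof_act_def rel_act_def o_inv_distrib)

lemma perm_group_action_perm_conj: "perm_group U \<Longrightarrow> perm_group_action U perm_conj"
  unfolding perm_group_action_def perm_group_action_axioms_def
  by (simp add: perm_group.bij_mem perm_conj_def o_inv_distrib o_assoc)

lemma perm_group_if_subgroup_Gstar: "is_subgroup U (Gstar n) \<Longrightarrow> perm_group U"
  unfolding perm_group_def is_subgroup_def Gstar_def by (auto simp: permutes_bij)

theorem theorem1:
  fixes n :: nat and U :: "(nat \<Rightarrow> nat) set"
    and F :: "(nat \<Rightarrow> (nat \<times> nat) set) \<Rightarrow> (nat \<Rightarrow> nat) set"
  assumes "n \<ge> 2"
    and "is_subgroup U (Gstar n)"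
    and "mechanism n F"
    and "symmetric n U F"
  shows "(\<exists>H. mechanism n H \<and> (\<forall>p\<in>profiles n. H p \<subseteq> F p) \<and> symmetric n U H \<and> resolute n H)
         \<longleftrightarrow> (\<forall>p\<in>profiles n. F p \<inter> CU n U p \<noteq> {})"
proof -
  have U: "perm_group U" using assms(2) by (rule perm_group_if_subgroup_Gstar)
  interpret A: perm_group_action_pair U prof_act perm_conj
    unfolding perm_group_action_pair_def
    using perm_group_action_prof_act[OF U] perm_group_action_perm_conj[OF U] by blast
  have refinement: "(mechanism n H \<and> (\<forall>p\<in>profiles n. H p \<subseteq> F p) \<and> symmetric n U H \<and> resolute n H)
      \<longleftrightarrow> ((\<forall>p\<in>profiles n. H p \<subseteq> F p) \<and> A.equivariant (profiles n) H
           \<and> (\<forall>p\<in>profiles n. \<exists>m. H p = {m}))" for H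
    using assms(3)
    by (auto simp: mechanism_def symmetric_def A.equivariant_def resolute_def card_1_singleton_iff)
  have CU: "F p \<inter> CU n U p \<noteq> {} \<longleftrightarrow> (\<exists>m\<in>F p. A.stabilizer_invariant p m)" if "p \<in> profiles n" for p
    using assms(3) that
    by (auto simp: mechanism_def CU_def Stab_def A.stabilizer_invariant_def A.source.stabilizer_def)
  have "A.equivariant (profiles n) F"
    using assms(4) by (simp add: symmetric_def A.equivariant_def)
  then show ?thesis
    by (simp only: refinement A.resolute_equivariant_refinement_iff CU cong: ball_cong)
qed

end
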